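(* Let $M$ be a finite set of alternatives, $\mathcal{R}$ the set of weak preference orders on $M$, and $\varphi:\mathcal{R}\to\Delta(M)$ a mechanism. If $\varphi$ is separation monotonic, separation upper invariant, and separation lower invariant, then it is separation strategyproof, i.e., for every separation $(R,R')$, $\varphi(R)$ first order-stochastically dominates $\varphi(R')$ at $R$, and $\varphi(R')$ first order-stochastically dominates $\varphi(R)$ at $R'$.
   Context: A preference order is a complete, transitive relation $R$ on $M$; $a\,I\,b$ means $a\,R\,b$ and $b\,R\,a$; $a\,P\,b$ means $a\,R\,b$ and not $b\,R\,a$. Write $R$ as $M_1\,P\,\cdots\,P\,M_K$ where $(M_k)$ are the nonempty indifference classes ordered so that $a\,P\,b$ for $a\in M_k$, $b\in M_{k'}$, $k<k'$. For $A\subseteq M$, $\varphi_A(R)=\sum_{a\in A}(\varphi(R))_a$. A lottery $x$ first order-stochastically dominates $y$ at $R$ if $\sum_{j: j R a}x_j\ge\sum_{j: j R a}y_j$ for all $a\in M$. A separation is a pair $(R,R')$ such that, with $R=M_1\,P\,\cdots\,P\,M_K$, there are $\kappa\in\{1,\dots,K\}$ and a partition of $M_\kappa$ into disjoint nonempty $M_\kappa^1,M_\kappa^2$ with $R'=M_1\,P'\,\cdots\,P'\,M_{\kappa-1}\,P'\,M_\kappa^1\,P'\,M_\kappa^2\,P'\,M_{\kappa+1}\,P'\,\cdots\,P'\,M_K$ (indifference within each listed set). Axioms, for every separation $(R,R')$: separation responsive: $\varphi_{M_\kappa^1}(R')\ge\varphi_{M_\kappa^1}(R)$ and $\varphi_{M_\kappa^2}(R')\le\varphi_{M_\kappa^2}(R)$;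 separation direct: if $\varphi_{M_k}(R)\ne\varphi_{M_k}(R')$ for some $k\in\{1,\dots,K\}$ then $\varphi_{M_\kappa^1}(R')\ne\varphi_{M_\kappa^1}(R)$ and $\varphi_{M_\kappa^2}(R')\ne\varphi_{M_\kappa^2}(R)$; separation monotonic: responsive and direct; separation upper invariant: $\varphi_{M_k}(R)=\varphi_{M_k}(R')$ for $k<\kappa$; separation lower invariant: $\varphi_{M_k}(R)=\varphi_{M_k}(R')$ for $k>\kappa$. *)

theory Defs
  imports Complex_Main
begin

text \<open>A weak preference order on M: a complete, transitive relation on M
  (represented as a subset of M \<times> M; (a,b) \<in> R means a R b).\<close>
definition pref_order :: "'a set \<Rightarrow> 'a rel \<Rightarrow> bool" where
  "pref_order M R \<longleftrightarrow> R \<subseteq> M \<times> M \<and> refl_on M R \<and> total_on M R \<and> trans R"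

definition lottery :: "'a set \<Rightarrow> ('a \<Rightarrow> real) \<Rightarrow> bool" where
  "lottery M x \<longleftrightarrow> (\<forall>a\<in>M. x a \<ge> 0) \<and> (\<Sum>a\<in>M. x a) = 1"

definition mechanism :: "'a set \<Rightarrow> ('a rel \<Rightarrow> 'a \<Rightarrow> real) \<Rightarrow> bool" where
  "mechanism M \<phi> \<longleftrightarrow> (\<forall>R. pref_order M R \<longrightarrow> lottery M (\<phi> R))"

definition prob_of :: "('a rel \<Rightarrow> 'a \<Rightarrow> real) \<Rightarrow> 'a rel \<Rightarrow> 'a set \<Rightarrow> real" where
  "prob_of \<phi> R A = (\<Sum>a\<in>A. \<phi> R a)"

definition ind_class :: "'a set \<Rightarrow> 'a rel \<Rightarrow> 'a set \<Rightarrow> bool" where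
  "ind_class M R X \<longleftrightarrow> (\<exists>a\<in>M. X = {b\<in>M. (a,b) \<in> R \<and> (b,a) \<in> R})"

definition strictly_above :: "'a rel \<Rightarrow> 'a set \<Rightarrow> 'a set \<Rightarrow> bool" where
  "strictly_above R X Y \<longleftrightarrow> (\<forall>x\<in>X. \<forall>y\<in>Y. (x,y) \<in> R \<and> (y,x) \<notin> R)"

text \<open>(R,R') is a separation splitting the indifference class M_\<kappa> = A \<union> B of R
  into M_\<kappa>^1 = A above M_\<kappa>^2 = B, all else unchanged.\<close>
definition separation :: "'a set \<Rightarrow> 'a rel \<Rightarrow> 'a rel \<Rightarrow> 'a set \<Rightarrow> 'a set \<Rightarrow> bool" where
  "separation M R R' A B \<longleftrightarrow>
     pref_order M R \<and> ind_class M R (A \<union> B) \<and> A \<noteq> {} \<and> B \<noteq> {} \<and> A \<inter> B = {} \<and>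
     R' = R - B \<times> A"

definition sep_responsive :: "'a set \<Rightarrow> ('a rel \<Rightarrow> 'a \<Rightarrow> real) \<Rightarrow> bool" where
  "sep_responsive M \<phi> \<longleftrightarrow> (\<forall>R R' A B. separation M R R' A B \<longrightarrow>
     prob_of \<phi> R' A \<ge> prob_of \<phi> R A \<and> prob_of \<phi> R' B \<le> prob_of \<phi> R B)"

definition sep_direct :: "'a set \<Rightarrow> ('a rel \<Rightarrow> 'a \<Rightarrow> real) \<Rightarrow> bool" where
  "sep_direct M \<phi> \<longleftrightarrow> (\<forall>R R' A B. separation M R R' A B \<longrightarrow>
     (\<exists>X. ind_class M R X \<and> prob_of \<phi> R X \<noteq> prob_of \<phi> R' X) \<longrightarrow>
     prob_of \<phi> R' A \<noteq> prob_of \<phi> R A \<and> prob_of \<phi> R' B \<noteq> prob_of \<phi> R B)"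

definition sep_monotonic :: "'a set \<Rightarrow> ('a rel \<Rightarrow> 'a \<Rightarrow> real) \<Rightarrow> bool" where
  "sep_monotonic M \<phi> \<longleftrightarrow> sep_responsive M \<phi> \<and> sep_direct M \<phi>"

definition sep_upper_invariant :: "'a set \<Rightarrow> ('a rel \<Rightarrow> 'a \<Rightarrow> real) \<Rightarrow> bool" where
  "sep_upper_invariant M \<phi> \<longleftrightarrow> (\<forall>R R' A B. separation M R R' A B \<longrightarrow>
     (\<forall>X. ind_class M R X \<and> strictly_above R X (A \<union> B) \<longrightarrow> prob_of \<phi> R X = prob_of \<phi> R' X))"

definition sep_lower_invariant :: "'a set \<Rightarrow> ('a rel \<Rightarrow> 'a \<Rightarrow> real) \<Rightarrow> bool" where
  "sep_lower_invariant M \<phi> \<longleftrightarrow> (\<forall>R R' A B. separation M R R' A B \<longrightarrow>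
     (\<forall>X. ind_class M R X \<and> strictly_above R (A \<union> B) X \<longrightarrow> prob_of \<phi> R X = prob_of \<phi> R' X))"

definition fosd :: "'a set \<Rightarrow> 'a rel \<Rightarrow> ('a \<Rightarrow> real) \<Rightarrow> ('a \<Rightarrow> real) \<Rightarrow> bool" where
  "fosd M R x y \<longleftrightarrow> (\<forall>a\<in>M. (\<Sum>j\<in>{j\<in>M. (j,a) \<in> R}. x j) \<ge> (\<Sum>j\<in>{j\<in>M. (j,a) \<in> R}. y j))"

definition sep_strategyproof :: "'a set \<Rightarrow> ('a rel \<Rightarrow> 'a \<Rightarrow> real) \<Rightarrow> bool" where
  "sep_strategyproof M \<phi> \<longleftrightarrow> (\<forall>R R' A B. separation M R R' A B \<longrightarrow>
     fosd M R (\<phi> R) (\<phi> R') \<and> fosd M R' (\<phi> R') (\<phi> R))"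

end

theory Submission
  imports Defs
begin

text \<open>Upper and lower invariance fix the probability of every indifference class of R other than
  the split class M_\<kappa>; as both outcomes are lotteries, M_\<kappa> keeps its probability as well.
  Upper contour sets of R are unions of indifference classes, so \<phi>(R) and \<phi>(R') give them equal
  probability, which yields dominance at R. Under R' the upper contour set of an alternative in
  M_\<kappa>^1 is the one under R with M_\<kappa>^2 removed, and responsiveness says that the
  probability of M_\<kappa>^2 can only drop; all other upper contour sets agree for R and R'.\<close>

definition indiff_class :: "'a set \<Rightarrow> 'a rel \<Rightarrow> 'a \<Rightarrow> 'a set" where
  "indiff_class M R a = {b\<in>M. (a,b) \<in> R \<and> (b,a) \<in> R}"

lemma ind_class_iff: "ind_class M R X \<longleftrightarrow> (\<exists>a\<in>M. X = indiff_class M R a)"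
  unfolding ind_class_def indiff_class_def ..

lemma pref_orderD:
  assumes "pref_order M R"
  shows "R \<subseteq> M \<times> M" and "\<And>a. a \<in> M \<Longrightarrow> (a,a) \<in> R"
    and "\<And>a b. a \<in> M \<Longrightarrow> b \<in> M \<Longrightarrow> (a,b) \<in> R \<or> (b,a) \<in> R" and "trans R"
  using assms unfolding pref_order_def refl_on_def total_on_def by (auto, metis)

lemma indiff_class_eq:
  assumes "pref_order M R" and "b \<in> indiff_class M R a"
  shows "indiff_class M R b = indiff_class M R a"
  using assms pref_orderD(4)[OF assms(1)] unfolding indiff_class_def by (auto dest: transD)

lemma self_in_indiff_class:
  assumes "pref_order M R" and "a \<in> M"
  shows "a \<in> indiff_class M R a"
  using assms pref_orderD(2)[OF assms(1)] unfolding indiff_class_def by blast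

lemma indiff_classes_ordered:
  assumes po: "pref_order M R" and "a \<in> M" and "b \<in> M"
  shows "indiff_class M R a = indiff_class M R b
    \<or> strictly_above R (indiff_class M R a) (indiff_class M R b)
    \<or> strictly_above R (indiff_class M R b) (indiff_class M R a)"
proof -
  have tr: "trans R" using pref_orderD(4)[OF po] .
  have above: "strictly_above R (indiff_class M R x) (indiff_class M R y)"
    if "(x,y) \<in> R" "(y,x) \<notin> R" for x y
    unfolding strictly_above_def indiff_class_def
    using that tr by (blast dest: transD)
  show ?thesis
  proof (cases "(a,b) \<in> R \<and> (b,a) \<in> R")
    case True
    then have "b \<in> indiff_class M R a" using \<open>b \<in> M\<close> unfolding indiff_class_def by blast
    then show ?thesis using indiff_class_eq[OF po] by blast
  next
    case False
    then show ?thesis using above pref_orderD(3)[OF po \<open>a \<in> M\<close> \<open>b \<in> M\<close>] by blast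
  qed
qed

lemma sum_indiff_classes:
  assumes fin: "finite M" and po: "pref_order M R" and UM: "U \<subseteq> M"
    and closed: "\<And>a b. a \<in> U \<Longrightarrow> b \<in> indiff_class M R a \<Longrightarrow> b \<in> U"
  shows "sum f U = (\<Sum>X\<in>indiff_class M R ` U. sum f X)"
proof -
  have "sum f U = (\<Sum>X\<in>indiff_class M R ` U. sum f {b\<in>U. indiff_class M R b = X})"
    using fin UM finite_subset by (blast intro: sum.image_gen)
  also have "\<dots> = (\<Sum>X\<in>indiff_class M R ` U. sum f X)"
  proof (rule sum.cong[OF refl])
    fix X assume "X \<in> indiff_class M R ` U"
    then obtain a where a: "a \<in> U" "X = indiff_class M R a" by blast
    have "{b\<in>U. indiff_class M R b = X} = X"
      using a UM closed indiff_class_eq[OF po] self_in_indiff_class[OF po] by blast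
    then show "sum f {b\<in>U. indiff_class M R b = X} = sum f X" by simp
  qed
  finally show ?thesis .
qed

lemma sum_indiff_class_eq_if_others_eq:
  fixes f g :: "'a \<Rightarrow> 'b::cancel_comm_monoid_add"
  assumes fin: "finite M" and po: "pref_order M R"
    and total: "sum f M = sum g M" and c: "c \<in> M"
    and others: "\<And>a. a \<in> M \<Longrightarrow> indiff_class M R a \<noteq> indiff_class M R c
      \<Longrightarrow> sum f (indiff_class M R a) = sum g (indiff_class M R a)"
  shows "sum f (indiff_class M R c) = sum g (indiff_class M R c)"
proof -
  let ?C = "indiff_class M R c" and ?classes = "indiff_class M R ` M"
  have closed: "\<And>a b. a \<in> M \<Longrightarrow> b \<in> indiff_class M R a \<Longrightarrow> b \<in> M"
    unfolding indiff_class_def by blast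
  have fin_classes: "finite ?classes" using fin by simp
  have split: "sum h M = sum h ?C + (\<Sum>X\<in>?classes - {?C}. sum h X)" for h
  proof -
    have "sum h M = (\<Sum>X\<in>?classes. sum h X)"
      by (rule sum_indiff_classes[OF fin po order_refl closed])
    also have "\<dots> = sum h ?C + (\<Sum>X\<in>?classes - {?C}. sum h X)"
      using c by (intro sum.remove[OF fin_classes]) blast
    finally show ?thesis .
  qed
  have "(\<Sum>X\<in>?classes - {?C}. sum f X) = (\<Sum>X\<in>?classes - {?C}. sum g X)"
    by (rule sum.cong[OF refl]) (use others in blast)
  then show ?thesis using split[of f] split[of g] total by simp
qed

lemma sum_upper_contour_eq:
  assumes fin: "finite M" and po: "pref_order M R"
    and classes: "\<And>a. a \<in> M \<Longrightarrow> sum f (indiff_class M R a) = sum g (indiff_class M R a)"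
  shows "sum f {j\<in>M. (j,a) \<in> R} = sum g {j\<in>M. (j,a) \<in> R}"
proof -
  let ?U = "{j\<in>M. (j,a) \<in> R}"
  have closed: "\<And>x b. x \<in> ?U \<Longrightarrow> b \<in> indiff_class M R x \<Longrightarrow> b \<in> ?U"
    using pref_orderD(4)[OF po] unfolding indiff_class_def by (blast dest: transD)
  have "sum f ?U = (\<Sum>X\<in>indiff_class M R ` ?U. sum f X)"
    by (rule sum_indiff_classes[OF fin po _ closed]) blast
  also have "\<dots> = (\<Sum>X\<in>indiff_class M R ` ?U. sum g X)"
    by (rule sum.cong[OF refl]) (use classes in blast)
  also have "\<dots> = sum g ?U"
    by (rule sum_indiff_classes[OF fin po _ closed, symmetric]) blast
  finally show ?thesis .
qed

lemma separation_split_class: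
  assumes "separation M R R' A B"
  obtains c where "c \<in> M" and "A \<union> B = indiff_class M R c"
  using assms unfolding separation_def ind_class_iff by blast

lemma separation_pref_order:
  assumes sep: "separation M R R' A B"
  shows "pref_order M R'"
proof -
  have po: "pref_order M R" and dis: "A \<inter> B = {}" and R': "R' = R - B \<times> A"
    using sep unfolding separation_def by auto
  obtain c where c: "c \<in> M" "A \<union> B = indiff_class M R c"
    using separation_split_class[OF sep] .
  have tr: "trans R" using pref_orderD(4)[OF po] .
  have indiff: "(x,y) \<in> R" if "x \<in> A \<union> B" "y \<in> A \<union> B" for x y
    using that c tr unfolding indiff_class_def by (blast dest: transD)
  have "refl_on M R'" using po R' dis unfolding pref_order_def refl_on_def by auto
  moreover have "total_on M R'"
    unfolding total_on_def R' using pref_orderD(3)[OF po] indiff dis by blast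
  moreover have "trans R'"
  proof (rule transI)
    fix x y z assume xy: "(x,y) \<in> R'" and yz: "(y,z) \<in> R'"
    then have "(x,y) \<in> R" "(y,z) \<in> R" using R' by auto
    then have xz: "(x,z) \<in> R" using tr by (blast dest: transD)
    have "(x,z) \<notin> B \<times> A"
    proof
      assume "(x,z) \<in> B \<times> A"
      \<comment> \<open>y lies between two members of the class A \<union> B, hence belongs to it\<close>
      with c \<open>(x,y) \<in> R\<close> \<open>(y,z) \<in> R\<close> have "y \<in> A \<union> B"
        using pref_orderD(1)[OF po] tr unfolding indiff_class_def by (blast dest: transD)
      then show False using \<open>(x,z) \<in> B \<times> A\<close> xy yz R' by auto
    qed
    then show "(x,z) \<in> R'" using xz R' by auto
  qed
  ultimately show ?thesis
    using pref_orderD(1)[OF po] R' unfolding pref_order_def by blast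
qed

lemma upper_contour_separation:
  assumes sep: "separation M R R' A B" and a: "a \<in> M"
  shows "{j\<in>M. (j,a) \<in> R'} = (if a \<in> A then {j\<in>M. (j,a) \<in> R} - B else {j\<in>M. (j,a) \<in> R})"
  using sep unfolding separation_def by auto

lemma separation_class_below:
  assumes sep: "separation M R R' A B" and a: "a \<in> A"
  shows "B \<subseteq> {j\<in>M. (j,a) \<in> R}"
proof -
  obtain c where "A \<union> B = indiff_class M R c"
    using separation_split_class[OF sep] .
  moreover have "trans R" using sep pref_orderD(4) unfolding separation_def by blast
  ultimately show ?thesis using a unfolding indiff_class_def by (blast dest: transD)
qed

lemma separation_other_class_prob_eq:
  assumes upper: "sep_upper_invariant M \<phi>" and lower: "sep_lower_invariant M \<phi>"
    and sep: "separation M R R' A B" and a: "a \<in> M"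
    and other: "indiff_class M R a \<noteq> A \<union> B"
  shows "prob_of \<phi> R (indiff_class M R a) = prob_of \<phi> R' (indiff_class M R a)"
proof -
  have po: "pref_order M R" using sep unfolding separation_def by blast
  obtain c where c: "c \<in> M" "A \<union> B = indiff_class M R c"
    using separation_split_class[OF sep] .
  have "ind_class M R (indiff_class M R a)" using a unfolding ind_class_iff by blast
  then show ?thesis
    using indiff_classes_ordered[OF po a c(1)] other c upper lower sep
    unfolding sep_upper_invariant_def sep_lower_invariant_def by metis
qed

lemma separation_class_prob_eq:
  assumes fin: "finite M" and mech: "mechanism M \<phi>"
    and upper: "sep_upper_invariant M \<phi>" and lower: "sep_lower_invariant M \<phi>"
    and sep: "separation M R R' A B" and a: "a \<in> M"
  shows "prob_of \<phi> R (indiff_class M R a) = prob_of \<phi> R' (indiff_class M R a)"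
proof -
  have po: "pref_order M R" using sep unfolding separation_def by blast
  obtain c where c: "c \<in> M" "A \<union> B = indiff_class M R c"
    using separation_split_class[OF sep] .
  have "sum (\<phi> R) M = sum (\<phi> R') M"
    using mech po separation_pref_order[OF sep] unfolding mechanism_def lottery_def by simp
  then have "prob_of \<phi> R (A \<union> B) = prob_of \<phi> R' (A \<union> B)"
    unfolding prob_of_def c(2)
    by (rule sum_indiff_class_eq_if_others_eq[OF fin po _ c(1)])
       (use separation_other_class_prob_eq[OF upper lower sep] c(2) in
         \<open>simp add: prob_of_def\<close>)
  then show ?thesis
    using separation_other_class_prob_eq[OF upper lower sep a] by metis
qed

theorem lemma4:
  fixes M :: "'a set" and \<phi> :: "'a rel \<Rightarrow> 'a \<Rightarrow> real"
  assumes "finite M"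
    and "mechanism M \<phi>"
    and "sep_monotonic M \<phi>"
    and "sep_upper_invariant M \<phi>"
    and "sep_lower_invariant M \<phi>"
  shows "sep_strategyproof M \<phi>"
  unfolding sep_strategyproof_def
proof (intro allI impI conjI)
  fix R R' A B assume sep: "separation M R R' A B"
  have po: "pref_order M R" using sep unfolding separation_def by blast
  let ?U = "\<lambda>a. {j\<in>M. (j,a) \<in> R}"
  have same_upper: "sum (\<phi> R) (?U a) = sum (\<phi> R') (?U a)" for a
    using sum_upper_contour_eq[OF assms(1) po] separation_class_prob_eq[OF assms(1,2,4,5) sep]
    unfolding prob_of_def by blast
  then show "fosd M R (\<phi> R) (\<phi> R')" unfolding fosd_def by simp
  have B_less: "sum (\<phi> R') B \<le> sum (\<phi> R) B"
    using assms(3) sep unfolding sep_monotonic_def sep_responsive_def prob_of_def by blast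
  have "sum (\<phi> R) (?U a - B) \<le> sum (\<phi> R') (?U a - B)" if "a \<in> A" for a
    using same_upper[of a] B_less separation_class_below[OF sep that] assms(1)
    by (simp add: sum_diff)
  then show "fosd M R' (\<phi> R') (\<phi> R)"
    unfolding fosd_def using same_upper upper_contour_separation[OF sep] by simp
qed

end
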